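(* Assume A2, let $x\in\mathcal I$, suppose the $x$-threshold word $\pi$ exists, and let $n\ge 1$. Then: (1) if $x\le y_{10^{n-1}}$ then $0^n$ does not occur as a factor of $\pi^\omega$; (2) if $x\ge y_{010^{n-1}}$ then $10^{n-1}1$ does not occur as a factor of $\pi^\omega$; (3) if $x\ge y_{01^{n-1}}$ then $1^n$ does not occur as a factor of $\pi^\omega$; (4) if $x\le y_{101^{n-1}}$ then $01^{n-1}0$ does not occur as a factor of $\pi^\omega$. (Here $0^0=1^0=\epsilon$.)
   Context: Words are finite strings over $\{0,1\}$; $\epsilon$ is the empty word, $w_k$ the $k$-th letter, $w^\omega$ the infinite repetition of $w$. Let $\mathcal I\subseteq\mathbb R$ be an interval and $\phi_0,\phi_1:\mathcal I\to\mathcal I$. For a word $w$ put $\phi_w:=\phi_{w_{|w|}}\circ\cdots\circ\phi_{w_1}$ (the first letter is applied first), $\phi_\epsilon=\mathrm{id}$. Assumption A2: for all $x<y$ in $\mathcal I$ and $k\in\{0,1\}$, $\phi_k(x)<\phi_k(y)$ and $\phi_k(y)-\phi_k(x)<y-x$; moreover $\phi_0,\phi_1$ have fixed points $y_0,y_1\in\mathcal I$ with $y_1<y_0$. Under A2, for every non-empty word $w$ the map $\phi_w$ has a unique fixed point in $\mathcal I$, denoted $y_w$. The $x$-threshold orbit is the sequence $(x_k)_{k\ge1}$ with $x_1=\phi_1(x)$ and $x_{k+1}=\phi_1(x_k)$ if $x_k\ge x$, $x_{k+1}=\phi_0(x_k)$ if $x_k<x$. The $x$-threshold word is the shortest (finite,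 non-empty) word $\pi$ such that $x_{k+1}=\phi_{(\pi^\omega)_k}(x_k)$ for all $k\ge1$, when such a word exists. *)

theory Defs
  imports "HOL-Analysis.Analysis"
begin

text \<open>Words over {0,1} are lists of naturals with letters in {0,1}.
  The maps are given as phi :: nat => real => real, phi 0 and phi 1 being the two maps.\<close>

definition word01 :: "nat list \<Rightarrow> bool" where
  "word01 w \<longleftrightarrow> set w \<subseteq> {0, 1}"

text \<open>phi_w: first letter applied first.\<close>
definition phiw :: "(nat \<Rightarrow> real \<Rightarrow> real) \<Rightarrow> nat list \<Rightarrow> real \<Rightarrow> real" where
  "phiw phi w = fold phi w"

definition A2 :: "real set \<Rightarrow> (nat \<Rightarrow> real \<Rightarrow> real) \<Rightarrow> bool" where
  "A2 I phi \<longleftrightarrow> is_interval I \<and>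
     (\<forall>k\<in>{0,1}. \<forall>z\<in>I. phi k z \<in> I) \<and>
     (\<forall>k\<in>{0,1}. \<forall>a\<in>I. \<forall>b\<in>I. a < b \<longrightarrow> phi k a < phi k b \<and> phi k b - phi k a < b - a) \<and>
     (\<exists>y0\<in>I. \<exists>y1\<in>I. phi 0 y0 = y0 \<and> phi 1 y1 = y1 \<and> y1 < y0)"

definition fixw :: "real set \<Rightarrow> (nat \<Rightarrow> real \<Rightarrow> real) \<Rightarrow> nat list \<Rightarrow> real" where
  "fixw I phi w = (THE y. y \<in> I \<and> phiw phi w y = y)"

text \<open>Threshold orbit: thr_orbit phi x k = x_k for k >= 1 (index 0 gives x itself,
  which makes x_1 = phi 1 x automatic).\<close>
fun thr_orbit :: "(nat \<Rightarrow> real \<Rightarrow> real) \<Rightarrow> real \<Rightarrow> nat \<Rightarrow> real" where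
  "thr_orbit phi x 0 = x"
| "thr_orbit phi x (Suc k) =
     (if thr_orbit phi x k \<ge> x then phi 1 (thr_orbit phi x k) else phi 0 (thr_orbit phi x k))"

text \<open>The k-th letter (1-indexed) of w^omega.\<close>
definition omega_letter :: "nat list \<Rightarrow> nat \<Rightarrow> nat" where
  "omega_letter w k = w ! ((k - 1) mod length w)"

definition codes_orbit :: "(nat \<Rightarrow> real \<Rightarrow> real) \<Rightarrow> real \<Rightarrow> nat list \<Rightarrow> bool" where
  "codes_orbit phi x w \<longleftrightarrow> w \<noteq> [] \<and> word01 w \<and>
     (\<forall>k\<ge>1. thr_orbit phi x (Suc k) = phi (omega_letter w k) (thr_orbit phi x k))"

definition threshold_word :: "(nat \<Rightarrow> real \<Rightarrow> real) \<Rightarrow> real \<Rightarrow> nat list \<Rightarrow> bool" where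
  "threshold_word phi x p \<longleftrightarrow> codes_orbit phi x p \<and>
     (\<forall>w. codes_orbit phi x w \<longrightarrow> length p \<le> length w)"

definition factor_omega :: "nat list \<Rightarrow> nat list \<Rightarrow> bool" where
  "factor_omega u w \<longleftrightarrow> (\<exists>i. \<forall>j<length u. u ! j = w ! ((i + j) mod length w))"

end

(*
  When y1 < x < y0 the orbit stays in [phi 1 x, phi 0 x), where phi 1 < phi 0, so the letters
  of pi^omega are exactly the threshold decisions x \<le> x_k; when x \<le> y1 or y0 \<le> x the
  threshold word is a single letter.  A forbidden factor, extended back to the last preceding
  opposite letter where necessary, exhibits a stretch of the orbit x_(m+n) = phi_w x_m with w
  the word of the hypothesis (or its tail).  Since phi_w is a contraction with fixed point y_w,
  it moves every point towards y_w, and comparing with the hypothesis on y_w shows that x_(m+n)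
  lies on the wrong side of the threshold x.
*)

theory Submission
  imports Defs
begin

lemma phiw_Nil [simp]: "phiw phi [] z = z"
  by (simp add: phiw_def)

lemma phiw_Cons [simp]: "phiw phi (c # w) z = phiw phi w (phi c z)"
  by (simp add: phiw_def)

lemma phiw_append [simp]: "phiw phi (u @ v) z = phiw phi v (phiw phi u z)"
  by (simp add: phiw_def)

lemma uniform_increase_unbounded:
  fixes s :: "nat \<Rightarrow> real"
  assumes "0 < c" and step: "\<And>k. s k + c \<le> s (Suc k)"
  shows "\<exists>k. b < s k"
proof -
  have linear: "s 0 + real k * c \<le> s k" for k
  proof (induction k)
    case (Suc k)
    then show ?case using step[of k] by (simp add: algebra_simps)
  qed simp
  obtain k where "b - s 0 < real k * c"
    using reals_Archimedean3[OF \<open>0 < c\<close>] by blast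
  then show ?thesis using linear[of k] by (intro exI[of _ k]) linarith
qed

lemma last_occurrence_before_run:
  fixes a :: "nat \<Rightarrow> 'a"
  assumes "a i = c" "i \<le> k" and run: "\<forall>j<n. a (k + j) \<noteq> c"
  shows "\<exists>m. a m = c \<and> (\<forall>j\<in>{1..n}. a (m + j) \<noteq> c)"
proof -
  define m where "m = (GREATEST t. t \<le> k \<and> a t = c)"
  have m: "m \<le> k" "a m = c"
    using GreatestI_nat[of "\<lambda>t. t \<le> k \<and> a t = c" i k] assms(1,2) by (auto simp: m_def)
  have "a (m + j) \<noteq> c" if j: "j \<in> {1..n}" for j
  proof (cases "m + j \<le> k")
    case True
    then show ?thesis
      using Greatest_le_nat[of "\<lambda>t. t \<le> k \<and> a t = c" "m + j" k] j by (auto simp: m_def)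
  next
    case False
    have "m \<noteq> k" using run m j by force
    then show ?thesis using run[rule_format, of "m + j - k"] False j m by auto
  qed
  with m show ?thesis by blast
qed

lemma set_replicate_subset_iff [simp]: "set (replicate r c) \<subseteq> A \<longleftrightarrow> r = 0 \<or> c \<in> A"
  by (cases r) auto

lemma nth_Cons_replicate_snoc:
  "j \<le> Suc r \<Longrightarrow> (c # replicate r d @ [e]) ! j = (if j = 0 then c else if j \<le> r then d else e)"
  by (cases j) (auto simp: nth_append)

text \<open>The letter chosen by the threshold rule at step k; a threshold word can only
  disagree with it at points where phi 0 and phi 1 coincide.\<close>

definition thr_letter :: "(nat \<Rightarrow> real \<Rightarrow> real) \<Rightarrow> real \<Rightarrow> nat \<Rightarrow> nat" where
  "thr_letter phi x k = (if x \<le> thr_orbit phi x k then 1 else 0)"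

lemma thr_orbit_Suc_letter: "thr_orbit phi x (Suc k) = phi (thr_letter phi x k) (thr_orbit phi x k)"
  by (simp add: thr_letter_def)

lemma thr_orbit_run:
  assumes "\<forall>j\<in>{1..r}. thr_letter phi x (m + j) = d"
  shows "thr_orbit phi x (m + Suc r) =
    phiw phi (thr_letter phi x m # replicate r d) (thr_orbit phi x m)"
  using assms
proof (induction r)
  case 0
  then show ?case by (simp add: thr_orbit_Suc_letter del: thr_orbit.simps)
next
  case (Suc r)
  have d: "thr_letter phi x (m + Suc r) = d" using Suc.prems by (simp del: add_Suc_right)
  have "thr_orbit phi x (m + Suc r) =
      phiw phi (thr_letter phi x m # replicate r d) (thr_orbit phi x m)"
    using Suc by (simp del: thr_orbit.simps)
  moreover have "thr_orbit phi x (m + Suc (Suc r)) = phi d (thr_orbit phi x (m + Suc r))"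
    by (metis add_Suc_right thr_orbit_Suc_letter d)
  ultimately show ?case by (simp del: thr_orbit.simps flip: replicate_append_same)
qed

lemma factor_omega_letters:
  assumes "factor_omega u p" "p \<noteq> []"
  shows "\<exists>k\<ge>1. \<forall>j<length u. omega_letter p (k + j) = u ! j"
proof -
  from assms(1) obtain i where "\<forall>j<length u. u ! j = p ! ((i + j) mod length p)"
    unfolding factor_omega_def by blast
  then show ?thesis by (intro exI[of _ "Suc i"]) (auto simp: omega_letter_def)
qed

lemma threshold_word_step:
  "threshold_word phi x p \<Longrightarrow> 1 \<le> k \<Longrightarrow>
    thr_orbit phi x (Suc k) = phi (omega_letter p k) (thr_orbit phi x k)"
  unfolding threshold_word_def codes_orbit_def by blast

lemma threshold_word_omega_letter: "threshold_word phi x p \<Longrightarrow> omega_letter p k \<in> {0, 1}"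
  unfolding threshold_word_def codes_orbit_def word01_def omega_letter_def
  by (meson nth_mem length_greater_0_conv mod_less_divisor subsetD)

locale A2_system =
  fixes I :: "real set" and phi :: "nat \<Rightarrow> real \<Rightarrow> real"
  assumes A2: "A2 I phi"
begin

lemma phi_in: "c \<in> {0, 1} \<Longrightarrow> z \<in> I \<Longrightarrow> phi c z \<in> I"
  using A2 unfolding A2_def by blast

lemma phi_strict_mono: "c \<in> {0, 1} \<Longrightarrow> a \<in> I \<Longrightarrow> b \<in> I \<Longrightarrow> a < b \<Longrightarrow> phi c a < phi c b"
  using A2 unfolding A2_def by blast

lemma phi_contraction:
  "c \<in> {0, 1} \<Longrightarrow> a \<in> I \<Longrightarrow> b \<in> I \<Longrightarrow> a < b \<Longrightarrow> phi c b - phi c a < b - a"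
  using A2 unfolding A2_def by blast

lemma A2_fixed_points:
  obtains y0 y1 where "y0 \<in> I" "y1 \<in> I" "phi 0 y0 = y0" "phi 1 y1 = y1" "y1 < y0"
  using A2 unfolding A2_def by blast

lemma phiw_in: "set w \<subseteq> {0, 1} \<Longrightarrow> z \<in> I \<Longrightarrow> phiw phi w z \<in> I"
proof (induction w arbitrary: z)
  case (Cons c w)
  then show ?case using phi_in[of c z] by simp
qed simp

lemma phiw_strict_mono:
  "set w \<subseteq> {0, 1} \<Longrightarrow> a \<in> I \<Longrightarrow> b \<in> I \<Longrightarrow> a < b \<Longrightarrow> phiw phi w a < phiw phi w b"
proof (induction w arbitrary: a b)
  case (Cons c w)
  then show ?case using phi_in[of c] phi_strict_mono[of c a b] by simp
qed simp

lemma phiw_mono: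
  "set w \<subseteq> {0, 1} \<Longrightarrow> a \<in> I \<Longrightarrow> b \<in> I \<Longrightarrow> a \<le> b \<Longrightarrow> phiw phi w a \<le> phiw phi w b"
  using phiw_strict_mono[of w a b] by (cases "a = b") auto

lemma phiw_contraction:
  assumes "w \<noteq> []" "set w \<subseteq> {0, 1}" "a \<in> I" "b \<in> I" "a < b"
  shows "phiw phi w b - phiw phi w a < b - a"
  using assms
proof (induction w arbitrary: a b rule: list_nonempty_induct)
  case (single c)
  then show ?case by (simp add: phi_contraction)
next
  case (cons c w)
  then have "phiw phi w (phi c b) - phiw phi w (phi c a) < phi c b - phi c a"
    by (simp add: phi_in phi_strict_mono)
  with cons.prems show ?case using phi_contraction[of c a b] by simp
qed

lemma phiw_nonexpansive:
  "set w \<subseteq> {0, 1} \<Longrightarrow> a \<in> I \<Longrightarrow> b \<in> I \<Longrightarrow> a \<le> b \<Longrightarrow> phiw phi w b - phiw phi w a \<le> b - a"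
  using phiw_contraction[of w a b] by (cases "w = [] \<or> a = b") auto

lemma phiw_continuous_on: "set w \<subseteq> {0, 1} \<Longrightarrow> continuous_on I (phiw phi w)"
proof (rule lipschitz_on_continuous_on[of 1], rule lipschitz_onI)
  fix a b assume "set w \<subseteq> {0, 1}" "a \<in> I" "b \<in> I"
  then show "dist (phiw phi w a) (phiw phi w b) \<le> 1 * dist a b"
    using phiw_nonexpansive[of w a b] phiw_nonexpansive[of w b a]
      phiw_mono[of w a b] phiw_mono[of w b a]
    by (cases "a \<le> b") (auto simp: dist_real_def)
qed simp

lemma lower_barrier:
  assumes "set w \<subseteq> {0, 1}" "b \<in> I" "\<And>c. c \<in> {0, 1} \<Longrightarrow> b \<le> phi c b" "z \<in> I" "b \<le> z"
  shows "b \<le> phiw phi w z"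
  using assms(1,4,5)
proof (induction w arbitrary: z)
  case (Cons c w)
  then have "b \<le> phi c z"
    using assms(2,3) phiw_mono[of "[c]" b z] by (fastforce intro: order_trans)
  with Cons show ?case by (simp add: phi_in)
qed simp

lemma upper_barrier:
  assumes "set w \<subseteq> {0, 1}" "b \<in> I" "\<And>c. c \<in> {0, 1} \<Longrightarrow> phi c b \<le> b" "z \<in> I" "z \<le> b"
  shows "phiw phi w z \<le> b"
  using assms(1,4,5)
proof (induction w arbitrary: z)
  case (Cons c w)
  then have "phi c z \<le> b"
    using assms(2,3) phiw_mono[of "[c]" z b] by (fastforce intro: order_trans)
  with Cons show ?case by (simp add: phi_in)
qed simp

lemma fixed_point_exists:
  assumes "set w \<subseteq> {0, 1}"
  shows "\<exists>y\<in>I. phiw phi w y = y"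
proof -
  obtain y0 y1 where y: "y0 \<in> I" "y1 \<in> I" "phi 0 y0 = y0" "phi 1 y1 = y1" "y1 < y0"
    by (rule A2_fixed_points)
  have "y1 \<le> phi c y1" "phi c y0 \<le> y0" if "c \<in> {0, 1}" for c
    using that y phi_contraction[of c y1 y0] by auto
  then have "y1 \<le> phiw phi w y1" "phiw phi w y0 \<le> y0"
    using lower_barrier[OF assms y(2)] upper_barrier[OF assms y(1)] y by auto
  moreover have sub: "{y1..y0} \<subseteq> I"
    using A2 y mem_is_interval_1_I[of I y1 y0] by (auto simp: A2_def)
  moreover have "continuous_on {y1..y0} (\<lambda>z. phiw phi w z - z)"
    by (intro continuous_intros continuous_on_subset[OF phiw_continuous_on[OF assms] sub])
  ultimately obtain z where "y1 \<le> z" "z \<le> y0" "phiw phi w z - z = 0"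
    using IVT2'[of "\<lambda>z. phiw phi w z - z" y0 0 y1] \<open>y1 < y0\<close> by auto
  with sub show ?thesis by auto
qed

lemma fixed_point_unique:
  assumes "w \<noteq> []" "set w \<subseteq> {0, 1}" "a \<in> I" "b \<in> I" "phiw phi w a = a" "phiw phi w b = b"
  shows "a = b"
  using phiw_contraction[OF assms(1,2)] assms(3-6) by (cases a b rule: linorder_cases) force+

lemma fixw_is_fixed_point:
  assumes "w \<noteq> []" "set w \<subseteq> {0, 1}"
  shows "fixw I phi w \<in> I" and "phiw phi w (fixw I phi w) = fixw I phi w"
proof -
  have "\<exists>!y. y \<in> I \<and> phiw phi w y = y"
    using fixed_point_exists[OF assms(2)] fixed_point_unique[OF assms] by blast
  then have "fixw I phi w \<in> I \<and> phiw phi w (fixw I phi w) = fixw I phi w"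
    unfolding fixw_def by (rule theI')
  then show "fixw I phi w \<in> I" "phiw phi w (fixw I phi w) = fixw I phi w" by auto
qed

lemma phiw_moves_toward_fixw:
  assumes "w \<noteq> []" "set w \<subseteq> {0, 1}" "z \<in> I"
  shows "z < fixw I phi w \<Longrightarrow> z < phiw phi w z" and "fixw I phi w < z \<Longrightarrow> phiw phi w z < z"
  using phiw_contraction[OF assms(1,2)] fixw_is_fixed_point[OF assms(1,2)] assms(3) by force+

lemma less_fixw_iff:
  assumes "w \<noteq> []" "set w \<subseteq> {0, 1}" "z \<in> I"
  shows "z < fixw I phi w \<longleftrightarrow> z < phiw phi w z"
  using phiw_moves_toward_fixw[OF assms] fixw_is_fixed_point(2)[OF assms(1,2)]
  by (cases z "fixw I phi w" rule: linorder_cases) auto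

lemma fixw_less_iff:
  assumes "w \<noteq> []" "set w \<subseteq> {0, 1}" "z \<in> I"
  shows "fixw I phi w < z \<longleftrightarrow> phiw phi w z < z"
  using phiw_moves_toward_fixw[OF assms] fixw_is_fixed_point(2)[OF assms(1,2)]
  by (cases z "fixw I phi w" rule: linorder_cases) auto

lemma le_fixw_iff:
  "w \<noteq> [] \<Longrightarrow> set w \<subseteq> {0, 1} \<Longrightarrow> z \<in> I \<Longrightarrow> z \<le> fixw I phi w \<longleftrightarrow> z \<le> phiw phi w z"
  using fixw_less_iff by (meson not_less)

lemma fixw_le_iff:
  "w \<noteq> [] \<Longrightarrow> set w \<subseteq> {0, 1} \<Longrightarrow> z \<in> I \<Longrightarrow> fixw I phi w \<le> z \<longleftrightarrow> phiw phi w z \<le> z"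
  using less_fixw_iff by (meson not_less)

lemma le_phiw_of_le_fixw:
  assumes "w \<noteq> []" "set w \<subseteq> {0, 1}" "x \<in> I" "z \<in> I" "x \<le> fixw I phi w" "x \<le> z"
  shows "x \<le> phiw phi w z"
  using le_fixw_iff[OF assms(1-3)] phiw_mono[OF assms(2-4)] assms(5,6) by fastforce

lemma phiw_less_of_fixw_le:
  assumes "w \<noteq> []" "set w \<subseteq> {0, 1}" "x \<in> I" "z \<in> I" "fixw I phi w \<le> x" "z < x"
  shows "phiw phi w z < x"
  using fixw_le_iff[OF assms(1-3)] phiw_strict_mono[OF assms(2,4,3)] assms(5,6) by fastforce

abbreviation y0 :: real where "y0 \<equiv> fixw I phi [0]"

abbreviation y1 :: real where "y1 \<equiv> fixw I phi [1]"

lemma y0_in: "y0 \<in> I" and phi_y0: "phi 0 y0 = y0"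
  using fixw_is_fixed_point[of "[0]"] by auto

lemma y1_in: "y1 \<in> I" and phi_y1: "phi 1 y1 = y1"
  using fixw_is_fixed_point[of "[1]"] by auto

lemma y1_less_y0: "y1 < y0"
proof -
  obtain a b where "a \<in> I" "b \<in> I" "phi 0 a = a" "phi 1 b = b" "b < a"
    by (rule A2_fixed_points)
  moreover have "a = y0" using fixed_point_unique[of "[0]" a y0] calculation y0_in phi_y0 by simp
  moreover have "b = y1" using fixed_point_unique[of "[1]" b y1] calculation y1_in phi_y1 by simp
  ultimately show ?thesis by simp
qed

lemma phi1_less_phi0:
  assumes "z \<in> I" "y1 \<le> z" "z \<le> y0"
  shows "phi 1 z < phi 0 z"
proof -
  have "z \<le> phi 0 z" "phi 1 z \<le> z"
    using le_fixw_iff[of "[0]" z] fixw_le_iff[of "[1]" z] assms by auto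
  moreover have "z < phi 0 z \<or> phi 1 z < z"
    using less_fixw_iff[of "[0]" z] fixw_less_iff[of "[1]" z] assms y1_less_y0 by force
  ultimately show ?thesis by linarith
qed

lemma no_common_orbit:
  assumes s_in: "\<And>k. s k \<in> I"
    and s0: "\<And>k. s (Suc k) = phi 0 (s k)" and s1: "\<And>k. s (Suc k) = phi 1 (s k)"
  shows False
proof -
  \<comment> \<open>Outside [y1, y0] the orbit is monotone with steps bounded away from 0, yet it
    cannot cross the fixed point on its side.\<close>
  have "s 0 < y1 \<or> y0 < s 0"
    using phi1_less_phi0[OF s_in, of 0] s0[of 0] s1[of 0] by fastforce
  then show False
  proof
    assume "s 0 < y1"
    have below: "s k < y1" for k
    proof (induction k)
      case (Suc k)
      then show ?case using phi_strict_mono[of 1 "s k" y1] s1[of k] s_in y1_in phi_y1 by simp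
    qed (fact \<open>s 0 < y1\<close>)
    have "s k + (phi 0 y1 - y1) \<le> s (Suc k)" for k
      using phiw_nonexpansive[of "[0]" "s k" y1] below[of k] s0[of k] s_in y1_in by simp
    moreover have "0 < phi 0 y1 - y1"
      using less_fixw_iff[of "[0]" y1] y1_in y1_less_y0 by simp
    ultimately obtain k where "y1 < s k"
      using uniform_increase_unbounded by blast
    with below[of k] show False by simp
  next
    assume "y0 < s 0"
    have above: "y0 < s k" for k
    proof (induction k)
      case (Suc k)
      then show ?case using phi_strict_mono[of 0 y0 "s k"] s0[of k] s_in y0_in phi_y0 by simp
    qed (fact \<open>y0 < s 0\<close>)
    have "- s k + (y0 - phi 1 y0) \<le> - s (Suc k)" for k
      using phiw_nonexpansive[of "[1]" y0 "s k"] above[of k] s1[of k] s_in y0_in by simp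
    moreover have "0 < y0 - phi 1 y0"
      using fixw_less_iff[of "[1]" y0] y0_in y1_less_y0 by simp
    ultimately obtain k where "- y0 < - s k"
      using uniform_increase_unbounded[of _ "\<lambda>k. - s k"] by blast
    with above[of k] show False by simp
  qed
qed

lemma less_fixw_0_Cons:
  assumes "z \<in> I" "z \<le> y1" "set w \<subseteq> {0, 1}"
  shows "z < fixw I phi (0 # w)"
proof -
  have "z < phi 0 z"
    using less_fixw_iff[of "[0]" z] assms(1,2) y1_less_y0 by simp
  moreover have "z \<le> phi c z" if "c \<in> {0, 1}" for c
    using that calculation le_fixw_iff[of "[1]" z] assms(1,2) by auto
  then have "z \<le> phiw phi w z"
    using lower_barrier[OF assms(3,1)] assms(1) by blast
  ultimately have "z < phiw phi (0 # w) z"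
    using phiw_strict_mono[OF assms(3,1) phi_in, of 0] assms(1) by fastforce
  then show ?thesis using less_fixw_iff[of "0 # w" z] assms by simp
qed

lemma fixw_1_Cons_less:
  assumes "z \<in> I" "y0 \<le> z" "set w \<subseteq> {0, 1}"
  shows "fixw I phi (1 # w) < z"
proof -
  have "phi 1 z < z"
    using fixw_less_iff[of "[1]" z] assms(1,2) y1_less_y0 by simp
  moreover have "phi c z \<le> z" if "c \<in> {0, 1}" for c
    using that calculation fixw_le_iff[of "[0]" z] assms(1,2) by auto
  then have "phiw phi w z \<le> z"
    using upper_barrier[OF assms(3,1)] assms(1) by blast
  ultimately have "phiw phi (1 # w) z < z"
    using phiw_strict_mono[OF assms(3) phi_in assms(1), of 1] assms(1) by fastforce
  then show ?thesis using fixw_less_iff[of "1 # w" z] assms by simp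
qed

end

locale threshold_dynamics = A2_system +
  fixes x :: real
  assumes x_in: "x \<in> I"
begin

abbreviation orbit :: "nat \<Rightarrow> real" where "orbit \<equiv> thr_orbit phi x"

abbreviation letter :: "nat \<Rightarrow> nat" where "letter \<equiv> thr_letter phi x"

lemma orbit_in: "orbit k \<in> I"
  by (induction k) (auto simp: x_in intro: phi_in)

lemma letter_eq_1_iff: "letter k = 1 \<longleftrightarrow> x \<le> orbit k"
  and letter_eq_0_iff: "letter k = 0 \<longleftrightarrow> orbit k < x"
  and letter_neq_1_iff: "letter k \<noteq> 1 \<longleftrightarrow> letter k = 0"
  and letter_neq_0_iff: "letter k \<noteq> 0 \<longleftrightarrow> letter k = 1"
  by (auto simp: thr_letter_def)

lemma orbit_above_of_le_y1: "x \<le> y1 \<Longrightarrow> x \<le> orbit k"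
proof (induction k)
  case (Suc k)
  then show ?case
    using le_phiw_of_le_fixw[of "[1]" x "orbit k"] x_in orbit_in by simp
qed simp

lemma orbit_below_of_y0_le:
  assumes "y0 \<le> x" "1 \<le> k"
  shows "orbit k < x"
  using assms(2)
proof (induction k rule: dec_induct)
  case base
  then show ?case using fixw_less_iff[of "[1]" x] assms(1) x_in y1_less_y0 by simp
next
  case (step k)
  then show ?case
    using phiw_less_of_fixw_le[of "[0]" x "orbit k"] assms(1) x_in orbit_in by simp
qed

lemma orbit_above_bound:
  assumes "y1 < x" "1 \<le> k" "x \<le> orbit k"
  shows "orbit k < phi 0 x"
proof -
  \<comment> \<open>The disjunction is the inductive invariant.\<close>
  have "orbit k < x \<or> orbit k < phi 0 x"
    using assms(2)
  proof (induction k rule: dec_induct)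
    case base
    then show ?case using fixw_less_iff[of "[1]" x] assms(1) x_in by simp
  next
    case (step k)
    show ?case
    proof (cases "x \<le> orbit k")
      case True
      then have "phi 1 (orbit k) < orbit k"
        using fixw_less_iff[of "[1]" "orbit k"] assms(1) orbit_in by simp
      then show ?thesis using True step.IH by simp
    next
      case False
      then show ?thesis using phi_strict_mono[of 0 "orbit k" x] orbit_in x_in by simp
    qed
  qed
  then show ?thesis using assms(3) by simp
qed

lemma orbit_below_bound:
  assumes "x < y0" "1 \<le> k" "orbit k < x"
  shows "phi 1 x \<le> orbit k"
proof -
  have "x \<le> orbit k \<or> phi 1 x \<le> orbit k"
    using assms(2)
  proof (induction k rule: dec_induct)
    case (step k)
    show ?case
    proof (cases "x \<le> orbit k")
      case True
      then show ?thesis using phiw_mono[of "[1]" x "orbit k"] orbit_in x_in by simp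
    next
      case False
      then have "orbit k < phi 0 (orbit k)"
        using less_fixw_iff[of "[0]" "orbit k"] assms(1) orbit_in by simp
      then show ?thesis using False step.IH by simp
    qed
  qed simp
  then show ?thesis using assms(3) by simp
qed

lemma threshold_word_singleton:
  assumes tw: "threshold_word phi x p" and codes: "codes_orbit phi x [c]"
  shows "p = [c]"
proof -
  have "length p \<le> 1" using tw codes unfolding threshold_word_def by fastforce
  moreover have "p \<noteq> []" "set p \<subseteq> {0, 1}"
    using tw by (auto simp: threshold_word_def codes_orbit_def word01_def)
  ultimately obtain d where p: "p = [d]" "d \<in> {0, 1}" by (cases p) auto
  have c: "c \<in> {0, 1}" using codes by (simp add: codes_orbit_def word01_def)
  have "orbit (Suc k) = phi d (orbit k)" "orbit (Suc k) = phi c (orbit k)" if "1 \<le> k" for k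
    using tw codes that p by (auto simp: threshold_word_def codes_orbit_def omega_letter_def)
  then have "False" if "d \<noteq> c"
    using no_common_orbit[of "\<lambda>k. orbit (Suc k)"] orbit_in that c p(2) by fastforce
  then show ?thesis using p by blast
qed

lemma threshold_word_letter:
  assumes tw: "threshold_word phi x p" and k: "1 \<le> k"
  shows "omega_letter p k = letter k"
proof -
  consider "x \<le> y1" | "y0 \<le> x" | "y1 < x" "x < y0" by linarith
  then show ?thesis
  proof cases
    case 1
    then have "codes_orbit phi x [1]"
      using orbit_above_of_le_y1 by (simp add: codes_orbit_def word01_def omega_letter_def)
    then show ?thesis
      using threshold_word_singleton[OF tw] orbit_above_of_le_y1[OF 1] letter_eq_1_iff
      by (simp add: omega_letter_def)
  next
    case 2
    then have "codes_orbit phi x [0]"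
      using orbit_below_of_y0_le by (force simp: codes_orbit_def word01_def omega_letter_def)
    then show ?thesis
      using threshold_word_singleton[OF tw] orbit_below_of_y0_le[OF 2 k] letter_eq_0_iff
      by (simp add: omega_letter_def)
  next
    case 3
    have "y1 \<le> orbit k \<and> orbit k \<le> y0"
    proof (cases "x \<le> orbit k")
      case True
      then show ?thesis
        using orbit_above_bound[OF 3(1) k] phiw_mono[of "[0]" x y0] 3 x_in y0_in phi_y0 by simp
    next
      case False
      then show ?thesis
        using orbit_below_bound[OF 3(2) k] phiw_mono[of "[1]" y1 x] 3 x_in y1_in phi_y1 by simp
    qed
    then have "phi 1 (orbit k) < phi 0 (orbit k)" using phi1_less_phi0 orbit_in by blast
    moreover have "phi (omega_letter p k) (orbit k) = phi (letter k) (orbit k)"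
      using threshold_word_step[OF tw k] thr_orbit_Suc_letter by metis
    moreover have "omega_letter p k \<in> {0, 1}" "letter k \<in> {0, 1}"
      using threshold_word_omega_letter[OF tw] by (auto simp: thr_letter_def)
    ultimately show ?thesis by auto
  qed
qed

lemma threshold_factor_letters:
  assumes tw: "threshold_word phi x p" and "factor_omega u p"
  shows "\<exists>k\<ge>1. \<forall>j<length u. letter (k + j) = u ! j"
proof -
  have "p \<noteq> []" using tw by (simp add: threshold_word_def codes_orbit_def)
  then obtain k where "1 \<le> k" "\<forall>j<length u. omega_letter p (k + j) = u ! j"
    using factor_omega_letters[OF assms(2)] by blast
  then show ?thesis using threshold_word_letter[OF tw] by (metis le_add1 order_trans)
qed

lemma threshold_factor_block:
  assumes "threshold_word phi x p" "factor_omega (c # replicate r d @ [e]) p"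
  shows "\<exists>k\<ge>1. letter k = c \<and> (\<forall>j\<in>{1..r}. letter (k + j) = d) \<and> letter (k + Suc r) = e"
proof -
  obtain k where k: "1 \<le> k" "\<forall>j\<le>Suc r. letter (k + j) = (c # replicate r d @ [e]) ! j"
    using threshold_factor_letters[OF assms] by (auto simp: less_Suc_eq_le)
  then show ?thesis
    using k(2)[rule_format, of 0] k(2)[rule_format, of "Suc r"]
    by (intro exI[of _ k]) (auto simp: nth_Cons_replicate_snoc)
qed

lemma no_factor_zeros:
  assumes tw: "threshold_word phi x p" and hyp: "x \<le> fixw I phi (1 # replicate r 0)"
  shows "\<not> factor_omega (replicate (Suc r) 0) p"
proof
  assume "factor_omega (replicate (Suc r) 0) p"
  then obtain k where "\<forall>j<Suc r. letter (k + j) = replicate (Suc r) 0 ! j"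
    using threshold_factor_letters[OF tw] by (metis length_replicate)
  then have "\<forall>j<Suc r. letter (k + j) \<noteq> 1" by (simp del: replicate_Suc)
  moreover have "letter 0 = 1" by (simp add: thr_letter_def)
  ultimately obtain m where m: "letter m = 1" "\<forall>j\<in>{1..Suc r}. letter (m + j) = 0"
    using last_occurrence_before_run[of letter 0 1 k "Suc r"] letter_neq_1_iff by auto
  then have "orbit (m + Suc r) = phiw phi (1 # replicate r 0) (orbit m)"
    using thr_orbit_run[of r phi x m 0] by simp
  moreover have "x \<le> orbit m" using m(1) letter_eq_1_iff by simp
  ultimately have "x \<le> orbit (m + Suc r)"
    using le_phiw_of_le_fixw[OF _ _ x_in orbit_in hyp] by simp
  moreover have "letter (m + Suc r) = 0" using m(2) by (simp del: add_Suc_right)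
  ultimately show False by (metis letter_eq_0_iff not_less)
qed

lemma no_factor_ones:
  assumes tw: "threshold_word phi x p" and hyp: "fixw I phi (0 # replicate r 1) \<le> x"
  shows "\<not> factor_omega (replicate (Suc r) 1) p"
proof
  assume "factor_omega (replicate (Suc r) 1) p"
  then obtain k where "1 \<le> k" "\<forall>j<Suc r. letter (k + j) = replicate (Suc r) 1 ! j"
    using threshold_factor_letters[OF tw] by (metis length_replicate)
  then have "1 \<le> k" "\<forall>j<Suc r. letter (k + j) \<noteq> 0" by (simp_all del: replicate_Suc)
  moreover have "y1 < x" using less_fixw_0_Cons[OF x_in, of "replicate r 1"] hyp by force
  then have "letter 1 = 0" using fixw_less_iff[of "[1]" x] x_in by (simp add: letter_eq_0_iff)
  ultimately obtain m where m: "letter m = 0" "\<forall>j\<in>{1..Suc r}. letter (m + j) = 1"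
    using last_occurrence_before_run[of letter 1 0 k "Suc r"] letter_neq_0_iff by auto
  then have "orbit (m + Suc r) = phiw phi (0 # replicate r 1) (orbit m)"
    using thr_orbit_run[of r phi x m 1] by simp
  moreover have "orbit m < x" using m(1) letter_eq_0_iff by simp
  ultimately have "orbit (m + Suc r) < x"
    using phiw_less_of_fixw_le[OF _ _ x_in orbit_in hyp] by simp
  moreover have "letter (m + Suc r) = 1" using m(2) by (simp del: add_Suc_right)
  ultimately show False by (metis letter_eq_1_iff not_less)
qed

lemma no_factor_1_zeros_1:
  assumes tw: "threshold_word phi x p" and hyp: "fixw I phi (0 # 1 # replicate r 0) \<le> x"
  shows "\<not> factor_omega (1 # replicate r 0 @ [1]) p"
proof
  let ?v = "1 # replicate r (0::nat)"
  assume "factor_omega (1 # replicate r 0 @ [1]) p"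
  then obtain k where k: "1 \<le> k" "letter k = 1" "\<forall>j\<in>{1..r}. letter (k + j) = 0"
    "letter (k + Suc r) = 1"
    using threshold_factor_block[OF tw] by blast
  have "y1 < x" using less_fixw_0_Cons[OF x_in, of ?v] hyp by force
  have "orbit (k + Suc r) = phiw phi ?v (orbit k)"
    using thr_orbit_run[of r phi x k 0] k by simp
  also have "\<dots> < phiw phi ?v (phi 0 x)"
    using orbit_above_bound[OF \<open>y1 < x\<close> k(1)] k(2) letter_eq_1_iff
    by (intro phiw_strict_mono) (auto simp: orbit_in x_in phi_in)
  also have "\<dots> \<le> x"
    using fixw_le_iff[of "0 # ?v" x] hyp x_in by simp
  finally show False using k(4) letter_eq_1_iff by simp
qed

lemma no_factor_0_ones_0:
  assumes tw: "threshold_word phi x p" and hyp: "x \<le> fixw I phi (1 # 0 # replicate r 1)"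
  shows "\<not> factor_omega (0 # replicate r 1 @ [0]) p"
proof
  let ?v = "0 # replicate r (1::nat)"
  assume "factor_omega (0 # replicate r 1 @ [0]) p"
  then obtain k where k: "1 \<le> k" "letter k = 0" "\<forall>j\<in>{1..r}. letter (k + j) = 1"
    "letter (k + Suc r) = 0"
    using threshold_factor_block[OF tw] by blast
  have "x < y0" using fixw_1_Cons_less[OF x_in, of ?v] hyp by force
  have "x \<le> phiw phi ?v (phi 1 x)"
    using le_fixw_iff[of "1 # ?v" x] hyp x_in by simp
  also have "\<dots> \<le> phiw phi ?v (orbit k)"
    using orbit_below_bound[OF \<open>x < y0\<close> k(1)] k(2) letter_eq_0_iff
    by (intro phiw_mono) (auto simp: orbit_in x_in phi_in)
  also have "\<dots> = orbit (k + Suc r)"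
    using thr_orbit_run[of r phi x k 1] k by simp
  finally show False using k(4) letter_eq_0_iff by simp
qed

end

theorem mainTheorem6:
  fixes I :: "real set" and phi :: "nat \<Rightarrow> real \<Rightarrow> real" and x :: real
    and p :: "nat list" and n :: nat
  assumes "A2 I phi" and "x \<in> I" and "threshold_word phi x p" and "n \<ge> 1"
  shows "(x \<le> fixw I phi ([1] @ replicate (n - 1) 0) \<longrightarrow>
            \<not> factor_omega (replicate n 0) p)
       \<and> (x \<ge> fixw I phi ([0, 1] @ replicate (n - 1) 0) \<longrightarrow>
            \<not> factor_omega ([1] @ replicate (n - 1) 0 @ [1]) p)
       \<and> (x \<ge> fixw I phi ([0] @ replicate (n - 1) 1) \<longrightarrow>
            \<not> factor_omega (replicate n 1) p)
       \<and> (x \<le> fixw I phi ([1, 0] @ replicate (n - 1) 1) \<longrightarrow>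
            \<not> factor_omega ([0] @ replicate (n - 1) 1 @ [0]) p)"
proof -
  interpret threshold_dynamics I phi x
    using assms(1,2) by unfold_locales
  obtain r where n: "n = Suc r" using \<open>n \<ge> 1\<close> by (cases n) auto
  show ?thesis
    using no_factor_zeros[OF assms(3), of r] no_factor_1_zeros_1[OF assms(3), of r]
      no_factor_ones[OF assms(3), of r] no_factor_0_ones_0[OF assms(3), of r]
    by (simp add: n)
qed

end
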